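(* Let $(S_1,\dots,S_{n-1},P)$ be a $\Gamma_n$-contraction on a Hilbert space $\mathcal H$ such that $P$ is invertible. Let $(A_1,\dots,A_{n-1})$ be its fundamental operator tuple and $(B_1,\dots,B_{n-1})$ the fundamental operator tuple of $(S_1^*,\dots,S_{n-1}^*,P^* )$. Then $[A_i,A_{n-i}]=0$ for all $i=1,\dots,n-1$ if and only if $[B_i,B_{n-i}]=0$ for all $i=1,\dots,n-1$.
   Context: $[X,Y]=XY-YX$. $\Gamma_n=\pi_n(\overline{\mathbb D}^n)$ with $\pi_n$ the symmetrization map. A $\Gamma_n$-contraction is a commuting tuple with Taylor joint spectrum in $\Gamma_n$ and $\|f(\cdot)\|\le\sup_{\Gamma_n}|f|$ for polynomials. $D_T=(I-T^*T)^{1/2}$, $\mathcal D_T=\overline{\operatorname{Ran}}D_T$. The fundamental operator tuple of a $\Gamma_n$-contraction $(S_1,\dots,S_{n-1},P)$ is the unique $(F_1,\dots,F_{n-1})$ in $\mathcal B(\mathcal D_P)$ with $S_i-S_{n-i}^*P=D_PF_iD_P$. *)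

theory Defs
  imports "HOL-Analysis.Analysis"
begin

text \<open>The distribution has no complex inner product spaces, so we introduce the class
of complex Hilbert spaces: a real Banach space carrying a complex scalar multiplication
compatible with the real one and a complex inner product (linear in the second,
conjugate-linear in the first argument) that induces the norm.\<close>

class chilbert = banach +
  fixes scaleC :: "complex \<Rightarrow> 'a \<Rightarrow> 'a" (infixr "*\<^sub>C" 75)
    and cinner :: "'a \<Rightarrow> 'a \<Rightarrow> complex"
  assumes scaleC_add_right: "a *\<^sub>C (x + y) = a *\<^sub>C x + a *\<^sub>C y"
    and scaleC_add_left: "(a + b) *\<^sub>C x = a *\<^sub>C x + b *\<^sub>C x"
    and scaleC_scaleC: "a *\<^sub>C (b *\<^sub>C x) = (a * b) *\<^sub>C x"
    and scaleC_one: "1 *\<^sub>C x = x"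
    and scaleR_scaleC: "scaleR r x = complex_of_real r *\<^sub>C x"
    and cinner_add_left: "cinner (x + y) z = cinner x z + cinner y z"
    and cinner_scaleC_left: "cinner (a *\<^sub>C x) y = cnj a * cinner x y"
    and cinner_commute: "cinner x y = cnj (cinner y x)"
    and cinner_nonneg: "0 \<le> Re (cinner x x)"
    and cinner_zero: "cinner x x = 0 \<Longrightarrow> x = 0"
    and norm_cinner: "norm x = sqrt (Re (cinner x x))"

definition bounded_clinear :: "('a::chilbert \<Rightarrow> 'a) \<Rightarrow> bool" where
  "bounded_clinear T \<longleftrightarrow> bounded_linear T \<and> (\<forall>c x. T (c *\<^sub>C x) = c *\<^sub>C T x)"

definition adjoint :: "('a::chilbert \<Rightarrow> 'a) \<Rightarrow> ('a \<Rightarrow> 'a)" where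
  "adjoint T = (THE T'. \<forall>x y. cinner (T x) y = cinner x (T' y))"

definition positive_op :: "('a::chilbert \<Rightarrow> 'a) \<Rightarrow> bool" where
  "positive_op A \<longleftrightarrow> bounded_clinear A \<and>
     (\<forall>x. Im (cinner x (A x)) = 0 \<and> 0 \<le> Re (cinner x (A x)))"

definition op_sqrt :: "('a::chilbert \<Rightarrow> 'a) \<Rightarrow> ('a \<Rightarrow> 'a)" where
  "op_sqrt A = (THE R. positive_op R \<and> R \<circ> R = A)"

definition defect_op :: "('a::chilbert \<Rightarrow> 'a) \<Rightarrow> ('a \<Rightarrow> 'a)" where
  "defect_op T = op_sqrt (\<lambda>x. x - adjoint T (T x))"

definition defect_space :: "('a::chilbert \<Rightarrow> 'a) \<Rightarrow> 'a set" where
  "defect_space T = closure (range (defect_op T))"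

definition invertible_op :: "('a::chilbert \<Rightarrow> 'a) \<Rightarrow> bool" where
  "invertible_op P \<longleftrightarrow> bounded_clinear P \<and>
     (\<exists>Q. bounded_clinear Q \<and> P \<circ> Q = id \<and> Q \<circ> P = id)"

definition esym :: "nat \<Rightarrow> nat \<Rightarrow> (nat \<Rightarrow> complex) \<Rightarrow> complex" where
  "esym n k z = (\<Sum>K \<in> {K. K \<subseteq> {1..n} \<and> card K = k}. \<Prod>j\<in>K. z j)"

text \<open>A point of \<open>\<complex>^n\<close> is written \<open>(s, p)\<close> with \<open>s\<close> carrying the coordinates
\<open>1..n-1\<close> and \<open>p\<close> the last coordinate; \<open>\<pi>_n(z) = (s_1(z),...,s_{n-1}(z), s_n(z))\<close>.\<close>
definition Gamma :: "nat \<Rightarrow> ((nat \<Rightarrow> complex) \<times> complex) set" where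
  "Gamma n = {((\<lambda>i. if i \<in> {1..n-1} then esym n i z else 0), esym n n z) | z.
               \<forall>j\<in>{1..n}. cmod (z j) \<le> 1}"

text \<open>A polynomial in the variables \<open>(s_1,...,s_{n-1},p)\<close> is a finitely supported
coefficient function on multi-indices; \<open>\<alpha> i\<close> for \<open>i\<in>{1..n-1}\<close> is the exponent
of \<open>s_i\<close> and \<open>\<alpha> n\<close> that of \<open>p\<close>.\<close>
definition is_poly :: "nat \<Rightarrow> ((nat \<Rightarrow> nat) \<Rightarrow> complex) \<Rightarrow> bool" where
  "is_poly n c \<longleftrightarrow> finite {\<alpha>. c \<alpha> \<noteq> 0} \<and>
     (\<forall>\<alpha>. c \<alpha> \<noteq> 0 \<longrightarrow> (\<forall>i. i \<notin> {1..n} \<longrightarrow> \<alpha> i = 0))"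

definition poly_eval :: "nat \<Rightarrow> ((nat \<Rightarrow> nat) \<Rightarrow> complex) \<Rightarrow> (nat \<Rightarrow> complex) \<Rightarrow> complex \<Rightarrow> complex" where
  "poly_eval n c s p = (\<Sum>\<alpha>\<in>{\<alpha>. c \<alpha> \<noteq> 0}. c \<alpha> * (\<Prod>i\<in>{1..n-1}. s i ^ \<alpha> i) * p ^ \<alpha> n)"

definition op_monomial :: "nat \<Rightarrow> (nat \<Rightarrow> 'a \<Rightarrow> 'a) \<Rightarrow> ('a \<Rightarrow> 'a) \<Rightarrow> (nat \<Rightarrow> nat) \<Rightarrow> ('a \<Rightarrow> 'a)" where
  "op_monomial n S P \<alpha> = foldr (\<lambda>i acc. (S i ^^ \<alpha> i) \<circ> acc) [1..<n] (P ^^ \<alpha> n)"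

definition poly_op :: "nat \<Rightarrow> ((nat \<Rightarrow> nat) \<Rightarrow> complex) \<Rightarrow> (nat \<Rightarrow> 'a::chilbert \<Rightarrow> 'a) \<Rightarrow> ('a \<Rightarrow> 'a) \<Rightarrow> ('a \<Rightarrow> 'a)" where
  "poly_op n c S P = (\<lambda>x. \<Sum>\<alpha>\<in>{\<alpha>. c \<alpha> \<noteq> 0}. c \<alpha> *\<^sub>C op_monomial n S P \<alpha> x)"

definition commuting_tuple :: "nat \<Rightarrow> (nat \<Rightarrow> 'a::chilbert \<Rightarrow> 'a) \<Rightarrow> ('a \<Rightarrow> 'a) \<Rightarrow> bool" where
  "commuting_tuple n S P \<longleftrightarrow>
     bounded_clinear P \<and> (\<forall>i\<in>{1..n-1}. bounded_clinear (S i)) \<and>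
     (\<forall>i\<in>{1..n-1}. S i \<circ> P = P \<circ> S i) \<and>
     (\<forall>i\<in>{1..n-1}. \<forall>j\<in>{1..n-1}. S i \<circ> S j = S j \<circ> S i)"

definition Gamma_contraction :: "nat \<Rightarrow> (nat \<Rightarrow> 'a::chilbert \<Rightarrow> 'a) \<Rightarrow> ('a \<Rightarrow> 'a) \<Rightarrow> bool" where
  "Gamma_contraction n S P \<longleftrightarrow> commuting_tuple n S P \<and>
     (\<forall>c. is_poly n c \<longrightarrow>
        onorm (poly_op n c S P) \<le> (SUP sp\<in>Gamma n. cmod (poly_eval n c (fst sp) (snd sp))))"

text \<open>An operator in \<open>B(D_P)\<close> is represented by a map on \<open>H\<close> leaving \<open>D_P\<close> invariant
and bounded complex-linear on \<open>D_P\<close>; only its values on \<open>D_P\<close> matter.\<close>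
definition op_on :: "'a::chilbert set \<Rightarrow> ('a \<Rightarrow> 'a) \<Rightarrow> bool" where
  "op_on D F \<longleftrightarrow> (\<forall>x\<in>D. F x \<in> D) \<and>
     (\<forall>x\<in>D. \<forall>y\<in>D. F (x + y) = F x + F y) \<and>
     (\<forall>c. \<forall>x\<in>D. F (c *\<^sub>C x) = c *\<^sub>C F x) \<and>
     (\<exists>K. \<forall>x\<in>D. norm (F x) \<le> K * norm x)"

definition fundamental_tuple ::
  "nat \<Rightarrow> (nat \<Rightarrow> 'a::chilbert \<Rightarrow> 'a) \<Rightarrow> ('a \<Rightarrow> 'a) \<Rightarrow> (nat \<Rightarrow> 'a \<Rightarrow> 'a) \<Rightarrow> bool" where
  "fundamental_tuple n S P F \<longleftrightarrow>
     (\<forall>i\<in>{1..n-1}. op_on (defect_space P) (F i) \<and>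
        (\<forall>x. S i x - adjoint (S (n - i)) (P x) = defect_op P (F i (defect_op P x))))"

definition commute_on :: "'a set \<Rightarrow> ('a \<Rightarrow> 'a) \<Rightarrow> ('a \<Rightarrow> 'a) \<Rightarrow> bool" where
  "commute_on D X Y \<longleftrightarrow> (\<forall>x\<in>D. X (Y x) = Y (X x))"

end

theory Submission
  imports Defs
begin

text \<open>The fundamental operators of \<open>(S, P)\<close> and of its adjoint tuple are linked by
\<open>\<langle>P A\<^sub>i u, v\<rangle> = \<langle>P u, B\<^sub>i v\<rangle>\<close> for \<open>u \<in> \<D>\<^sub>P\<close>, \<open>v \<in> \<D>\<^sub>P\<^sub>*\<close>: on \<open>u = D\<^sub>P x\<close>,
\<open>v = D\<^sub>P\<^sub>* w\<close> both sides equal \<open>\<langle>P x, S\<^sub>i\<^sup>* w - S\<^sub>n\<^sub>-\<^sub>i P\<^sup>* w\<rangle>\<close> by the intertwining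
\<open>D\<^sub>P\<^sub>* P = P D\<^sub>P\<close>, and the relation extends to the defect spaces by continuity.
Consequently \<open>P [A\<^sub>i, A\<^sub>n\<^sub>-\<^sub>i]\<close> is paired with \<open>[B\<^sub>n\<^sub>-\<^sub>i, B\<^sub>i]\<close>; since an invertible \<open>P\<close>
maps \<open>\<D>\<^sub>P\<close> onto \<open>\<D>\<^sub>P\<^sub>*\<close>, one commutator vanishes iff the other does.

The intertwining needs the defect operators themselves: \<open>D\<^sub>P\<close> is the unique positive
square root of \<open>I - P\<^sup>* P\<close>, which is realised by the binomial series of \<open>\<surd>(1 - t)\<close> in
\<open>P\<^sup>* P\<close>; the series commutes with everything that intertwines \<open>P\<^sup>* P\<close> and \<open>P P\<^sup>*\<close>.
Adjoints come from the Riesz representation theorem, proved via nearest points.\<close>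

section \<open>Complex inner products\<close>

lemma cinner_add_right: "cinner x (y + z) = cinner x y + cinner x (z::'a::chilbert)"
  by (metis cinner_commute cinner_add_left complex_cnj_add)

lemma cinner_scaleC_right: "cinner x (a *\<^sub>C y) = a * cinner x (y::'a::chilbert)"
  by (metis cinner_commute cinner_scaleC_left complex_cnj_cnj complex_cnj_mult)

lemma cinner_zero_left [simp]: "cinner 0 (y::'a::chilbert) = 0"
  using cinner_add_left[of "0::'a" 0 y] by simp

lemma cinner_zero_right [simp]: "cinner x (0::'a::chilbert) = 0"
  using cinner_add_right[of x "0::'a" 0] by simp

lemma cinner_minus_left: "cinner (- x) (y::'a::chilbert) = - cinner x y"
  using cinner_add_left[of x "-x" y] by (simp add: add_eq_0_iff)

lemma cinner_minus_right: "cinner x (- y::'a::chilbert) = - cinner x y"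
  using cinner_add_right[of x y "-y"] by (simp add: add_eq_0_iff)

lemma cinner_diff_left: "cinner (x - z) (y::'a::chilbert) = cinner x y - cinner z y"
  using cinner_add_left[of x "-z" y] by (simp add: cinner_minus_left)

lemma cinner_diff_right: "cinner x (y - z::'a::chilbert) = cinner x y - cinner x z"
  using cinner_add_right[of x y "-z"] by (simp add: cinner_minus_right)

lemma cinner_sum_right: "cinner x (\<Sum>i\<in>I. f i::'a::chilbert) = (\<Sum>i\<in>I. cinner x (f i))"
  by (induction I rule: infinite_finite_induct) (auto simp: cinner_add_right)

lemma cinner_scaleR_left: "cinner (r *\<^sub>R x) (y::'a::chilbert) = r *\<^sub>R cinner x y"
  by (simp add: scaleR_scaleC cinner_scaleC_left scaleR_conv_of_real)

lemma cinner_scaleR_right: "cinner x (r *\<^sub>R y::'a::chilbert) = r *\<^sub>R cinner x y"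
  by (simp add: scaleR_scaleC cinner_scaleC_right scaleR_conv_of_real)

lemma scaleC_zero_right [simp]: "a *\<^sub>C (0::'a::chilbert) = 0"
  using scaleC_add_right[of a "0::'a" 0] by simp

lemma scaleC_minus_right: "a *\<^sub>C (- x::'a::chilbert) = - (a *\<^sub>C x)"
  using scaleC_add_right[of a x "-x"] by (simp add: add_eq_0_iff)

lemma scaleC_diff_right: "a *\<^sub>C (x - y::'a::chilbert) = a *\<^sub>C x - a *\<^sub>C y"
  using scaleC_add_right[of a x "-y"] by (simp add: scaleC_minus_right)

lemma cinner_self: "cinner x (x::'a::chilbert) = complex_of_real ((norm x)\<^sup>2)"
proof -
  have "Im (cinner x x) = 0"
    using cinner_commute[of x x]
    by (metis cnj.simps(2) neg_equal_zero)
  moreover have "Re (cinner x x) = (norm x)\<^sup>2"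
    using norm_cinner[of x] cinner_nonneg[of x] by simp
  ultimately show ?thesis by (simp add: complex_eq_iff)
qed

lemma cinner_self_eq_0 [simp]: "cinner x x = 0 \<longleftrightarrow> x = (0::'a::chilbert)"
  using cinner_zero by auto

lemma cinner_eq_right: "(\<And>y. cinner y x = cinner y x') \<Longrightarrow> x = (x'::'a::chilbert)"
  using cinner_self_eq_0[of "x - x'"] by (simp add: cinner_diff_right)

lemma norm_scaleC: "norm (a *\<^sub>C (x::'a::chilbert)) = cmod a * norm x"
proof -
  have "complex_of_real ((norm (a *\<^sub>C x))\<^sup>2) = cinner (a *\<^sub>C x) (a *\<^sub>C x)"
    by (simp only: cinner_self)
  also have "\<dots> = cnj a * a * cinner x x"
    by (simp add: cinner_scaleC_left cinner_scaleC_right)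
  also have "\<dots> = complex_of_real ((cmod a * norm x)\<^sup>2)"
    by (simp add: cinner_self power_mult_distrib mult.commute complex_mult_cnj norm_complex_def)
  finally show ?thesis
    by (simp only: of_real_eq_iff) (simp add: power2_eq_iff_nonneg)
qed

lemma norm_add_squared:
  "(norm (x + y))\<^sup>2 = (norm x)\<^sup>2 + (norm y)\<^sup>2 + 2 * Re (cinner x (y::'a::chilbert))"
proof -
  have "complex_of_real ((norm (x + y))\<^sup>2) = cinner (x + y) (x + y)"
    by (simp only: cinner_self)
  also have "\<dots> = cinner x x + cinner y y + (cinner x y + cnj (cinner x y))"
    by (simp add: cinner_add_left cinner_add_right algebra_simps flip: cinner_commute)
  finally show ?thesis
    by (simp add: complex_add_cnj cinner_self complex_eq_iff)
qed

lemma cauchy_schwarz: "cmod (cinner x y) \<le> norm x * norm (y::'a::chilbert)"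
proof (cases "y = 0")
  case False
  define c where "c = cinner y x"
  define N where "N = (norm y)\<^sup>2"
  have N: "N > 0" using False by (simp add: N_def)
  define z where "z = complex_of_real N *\<^sub>C x - c *\<^sub>C y"
  have cxy: "cinner x y = cnj c" by (simp add: c_def flip: cinner_commute)
  have "cinner z z = of_real N * of_real N * cinner x x - of_real N * c * cinner x y
       - of_real N * cnj c * cinner y x + cnj c * c * cinner y y"
    unfolding z_def
    by (simp add: cinner_diff_left cinner_diff_right cinner_scaleC_left cinner_scaleC_right
        algebra_simps)
  also have "\<dots> = of_real N * (of_real N * of_real ((norm x)\<^sup>2) - c * cnj c)"
    by (simp add: cxy c_def[symmetric] cinner_self N_def[symmetric] algebra_simps)
  also have "c * cnj c = of_real ((cmod c)\<^sup>2)"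
    by (simp add: complex_mult_cnj norm_complex_def)
  finally have "cinner z z = of_real (N * (N * (norm x)\<^sup>2 - (cmod c)\<^sup>2))"
    by simp
  then have "0 \<le> N * (N * (norm x)\<^sup>2 - (cmod c)\<^sup>2)"
    by (metis cinner_self of_real_eq_iff zero_le_power2)
  then have "(cmod c)\<^sup>2 \<le> (norm y * norm x)\<^sup>2"
    using N by (simp add: N_def power_mult_distrib zero_le_mult_iff)
  then have "cmod c \<le> norm y * norm x"
    by (rule power2_le_imp_le) simp
  then show ?thesis
    by (simp add: c_def cinner_commute[of x y] mult.commute)
qed simp

lemma bounded_bilinear_cinner: "bounded_bilinear (cinner :: 'a::chilbert \<Rightarrow> 'a \<Rightarrow> complex)"
  by (rule bounded_bilinear.intro)
    (auto simp: cinner_add_left cinner_add_right cinner_scaleR_left cinner_scaleR_right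
      intro!: exI[of _ 1] cauchy_schwarz)

lemmas tendsto_cinner [tendsto_intros] = bounded_bilinear.tendsto [OF bounded_bilinear_cinner]
lemmas continuous_on_cinner [continuous_intros] =
  bounded_bilinear.continuous_on [OF bounded_bilinear_cinner]

section \<open>Closed complex subspaces and the Riesz representation\<close>

definition csubspace :: "'a::chilbert set \<Rightarrow> bool" where
  "csubspace K \<longleftrightarrow> 0 \<in> K \<and> (\<forall>x\<in>K. \<forall>y\<in>K. x + y \<in> K) \<and> (\<forall>c. \<forall>x\<in>K. c *\<^sub>C x \<in> K)"

lemma csubspace_0: "csubspace K \<Longrightarrow> 0 \<in> K"
  by (simp add: csubspace_def)

lemma csubspace_add: "csubspace K \<Longrightarrow> x \<in> K \<Longrightarrow> y \<in> K \<Longrightarrow> x + y \<in> K"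
  by (simp add: csubspace_def)

lemma csubspace_scaleC: "csubspace K \<Longrightarrow> x \<in> K \<Longrightarrow> c *\<^sub>C x \<in> K"
  by (simp add: csubspace_def)

lemma csubspace_scaleR: "csubspace K \<Longrightarrow> x \<in> K \<Longrightarrow> r *\<^sub>R x \<in> K"
  by (simp add: csubspace_scaleC scaleR_scaleC)

lemma csubspace_diff: "csubspace K \<Longrightarrow> x \<in> K \<Longrightarrow> y \<in> K \<Longrightarrow> x - y \<in> K"
  using csubspace_add[of K x "(-1) *\<^sub>R y"] csubspace_scaleR[of K y "-1"] by simp

lemma bounded_linear_scaleC: "bounded_linear (\<lambda>x::'a::chilbert. c *\<^sub>C x)"
proof (rule bounded_linear_intro[where K="cmod c"])
  show "c *\<^sub>C (r *\<^sub>R x) = r *\<^sub>R (c *\<^sub>C x)" for r and x :: 'a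
    by (simp add: scaleR_scaleC scaleC_scaleC mult.commute)
qed (simp_all add: scaleC_add_right norm_scaleC mult.commute)

lemma csubspace_closure:
  assumes K: "csubspace K"
  shows "csubspace (closure K)"
proof -
  have "(\<lambda>(x, y). x + y) ` closure (K \<times> K) \<subseteq> closure K"
    by (rule image_closure_subset)
      (auto simp: case_prod_unfold intro!: continuous_intros closure_subset[THEN subsetD]
        csubspace_add[OF K])
  moreover have "(\<lambda>x. c *\<^sub>C x) ` closure K \<subseteq> closure K" for c
    by (rule image_closure_subset)
      (auto intro: linear_continuous_on bounded_linear_scaleC closure_subset[THEN subsetD]
        csubspace_scaleC[OF K])
  ultimately show ?thesis
    using csubspace_0[OF K] closure_subset
    unfolding csubspace_def closure_Times by blast
qed

lemma parallelogram_law: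
  "(norm (u + v))\<^sup>2 + (norm (u - v))\<^sup>2 = 2 * (norm u)\<^sup>2 + 2 * (norm (v::'a::chilbert))\<^sup>2"
  using norm_add_squared[of u v] norm_add_squared[of u "-v"] by (simp add: cinner_minus_right)

lemma Cauchy_if_norm_diff_squared_le:
  fixes f :: "nat \<Rightarrow> 'a::real_normed_vector"
  assumes close: "\<And>m l. (norm (f m - f l))\<^sup>2 \<le> 2 * inverse (real (Suc m)) + 2 * inverse (real (Suc l))"
  shows "Cauchy f"
proof (rule CauchyI)
  fix e :: real assume e: "e > 0"
  obtain M where M: "inverse (real (Suc M)) < e\<^sup>2 / 4"
    using reals_Archimedean[of "e\<^sup>2/4"] e by auto
  have "norm (f m - f l) < e" if "m \<ge> M" "l \<ge> M" for m l
  proof -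
    have "inverse (real (Suc m)) \<le> inverse (real (Suc M))"
      "inverse (real (Suc l)) \<le> inverse (real (Suc M))"
      using that by (auto simp: field_simps)
    then have "(norm (f m - f l))\<^sup>2 < e\<^sup>2" using close[of m l] M by linarith
    then show ?thesis using e by (simp add: power_less_imp_less_base)
  qed
  then show "\<exists>M. \<forall>m\<ge>M. \<forall>n\<ge>M. norm (f m - f n) < e" by blast
qed

lemma closed_csubspace_nearest_point:
  assumes K: "csubspace K" and "closed K"
  obtains k0 where "k0 \<in> K" and "\<And>k. k \<in> K \<Longrightarrow> norm (y - k0) \<le> norm (y - k)"
proof -
  define d2 where "d2 = (INF k\<in>K. (norm (y - k))\<^sup>2)"
  have d2_le: "d2 \<le> (norm (y - k))\<^sup>2" if "k \<in> K" for k
    unfolding d2_def using that by (intro cINF_lower bdd_belowI2[of _ 0]) auto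
  have "\<exists>k\<in>K. (norm (y - k))\<^sup>2 < d2 + inverse (real (Suc m))" for m
    using cInf_lessD[of "(\<lambda>k. (norm (y - k))\<^sup>2) ` K"] csubspace_0[OF K]
    unfolding d2_def by fastforce
  then obtain ks where ks_K: "\<And>m. ks m \<in> K"
    and ks_d2: "\<And>m. (norm (y - ks m))\<^sup>2 < d2 + inverse (real (Suc m))" by metis
  \<comment> \<open>the parallelogram law applied to \<open>y - ks m\<close> and \<open>y - ks l\<close>, whose midpoint lies in \<open>K\<close>\<close>
  have close: "(norm (ks m - ks l))\<^sup>2 \<le> 2 * inverse (real (Suc m)) + 2 * inverse (real (Suc l))"
    for m l
  proof -
    have "(1/2) *\<^sub>R (ks m + ks l) \<in> K"
      by (intro csubspace_scaleR[OF K] csubspace_add[OF K] ks_K)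
    then have "d2 \<le> (norm (y - (1/2) *\<^sub>R (ks m + ks l)))\<^sup>2" by (rule d2_le)
    moreover have "(y - ks m) + (y - ks l) = 2 *\<^sub>R (y - (1/2) *\<^sub>R (ks m + ks l))"
      by (simp add: algebra_simps scaleR_2)
    ultimately show ?thesis
      using parallelogram_law[of "y - ks m" "y - ks l"] ks_d2[of m] ks_d2[of l]
      by (simp add: power_mult_distrib norm_minus_commute)
  qed
  have "Cauchy ks" by (rule Cauchy_if_norm_diff_squared_le[OF close])
  then obtain k0 where k0: "ks \<longlonglongrightarrow> k0"
    by (auto simp: Cauchy_convergent_iff convergent_def)
  have "k0 \<in> K" by (rule closed_sequentially[OF \<open>closed K\<close> ks_K k0])
  moreover have "(norm (y - k0))\<^sup>2 \<le> d2"
  proof (rule LIMSEQ_le)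
    show "(\<lambda>m. (norm (y - ks m))\<^sup>2) \<longlonglongrightarrow> (norm (y - k0))\<^sup>2"
      by (intro tendsto_intros k0)
    show "(\<lambda>m. d2 + inverse (real (Suc m))) \<longlonglongrightarrow> d2"
      by (rule LIMSEQ_inverse_real_of_nat_add)
  qed (use ks_d2 less_imp_le in blast)
  ultimately show ?thesis
  proof (intro that)
    fix k assume "k \<in> K"
    with \<open>(norm (y - k0))\<^sup>2 \<le> d2\<close> have "(norm (y - k0))\<^sup>2 \<le> (norm (y - k))\<^sup>2"
      using d2_le by (blast intro: order_trans)
    then show "norm (y - k0) \<le> norm (y - k)"
      by (rule power2_le_imp_le) simp
  qed
qed

lemma nearest_point_orthogonal:
  assumes K: "csubspace K" and k: "k \<in> K" and w: "\<And>k. k \<in> K \<Longrightarrow> norm w \<le> norm (w - k)"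
  shows "cinner w k = 0"
proof (rule ccontr)
  assume "cinner w k \<noteq> 0"
  then have "k \<noteq> 0" by auto
  define c where "c = cinner k w"
  define N where "N = (norm k)\<^sup>2"
  have N: "N > 0" using \<open>k \<noteq> 0\<close> by (simp add: N_def)
  define t where "t = c / complex_of_real N"
  \<comment> \<open>subtracting from \<open>w\<close> its component along \<open>k\<close> shortens it by \<open>\<bar>c\<bar>\<^sup>2/N\<close>\<close>
  have "(norm (w - t *\<^sub>C k))\<^sup>2 = (norm w)\<^sup>2 + (norm (t *\<^sub>C k))\<^sup>2 + 2 * Re (cinner w (- (t *\<^sub>C k)))"
    using norm_add_squared[of w "- (t *\<^sub>C k)"] by simp
  also have "(norm (t *\<^sub>C k))\<^sup>2 = (cmod c)\<^sup>2 / N"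
  proof -
    have ct: "cmod t = cmod c / N" using N by (simp add: t_def norm_divide)
    have "(norm (t *\<^sub>C k))\<^sup>2 = (cmod c / N)\<^sup>2 * N"
      by (simp add: norm_scaleC ct power_mult_distrib N_def power_divide)
    also have "\<dots> = (cmod c)\<^sup>2 / N" using N by (simp add: power2_eq_square field_simps)
    finally show ?thesis .
  qed
  also have "cinner w (- (t *\<^sub>C k)) = - (t * cnj c)"
    by (simp add: cinner_minus_right cinner_scaleC_right c_def flip: cinner_commute)
  also have "t * cnj c = complex_of_real ((cmod c)\<^sup>2 / N)"
    by (simp add: t_def complex_norm_square [symmetric])
  finally have "(norm (w - t *\<^sub>C k))\<^sup>2 = (norm w)\<^sup>2 - (cmod c)\<^sup>2 / N"
    by simp
  moreover have "norm w \<le> norm (w - t *\<^sub>C k)"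
    by (intro w csubspace_scaleC[OF K k])
  ultimately have "(cmod c)\<^sup>2 / N \<le> 0"
    by (smt (verit) norm_ge_zero power_mono)
  then have "c = 0" using N by (simp add: divide_le_0_iff)
  then show False
    using \<open>cinner w k \<noteq> 0\<close> by (simp add: c_def cinner_commute[of w k])
qed

lemma riesz_representation:
  fixes f :: "'a::chilbert \<Rightarrow> complex"
  assumes f: "bounded_linear f" and f_scaleC: "\<And>c x. f (c *\<^sub>C x) = c * f x"
  obtains z where "\<And>x. f x = cinner z x"
proof (cases "\<forall>x. f x = 0")
  case True
  then show ?thesis by (intro that[of 0]) simp
next
  case False
  then obtain y where "f y \<noteq> 0" by blast
  interpret f: bounded_linear f by (rule f)
  define K where "K = {x. f x = 0}"
  have K: "csubspace K"
    by (simp add: csubspace_def K_def f.add f_scaleC)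
  have "closed K"
    unfolding K_def by (intro closed_Collect_eq continuous_intros f.continuous_on)
  obtain k0 where "k0 \<in> K" and k0: "\<And>k. k \<in> K \<Longrightarrow> norm (y - k0) \<le> norm (y - k)"
    using closed_csubspace_nearest_point[OF K \<open>closed K\<close>] by blast
  define w where "w = y - k0"
  have "w \<noteq> 0" using \<open>k0 \<in> K\<close> \<open>f y \<noteq> 0\<close> by (auto simp: w_def K_def)
  have w_orth: "cinner w k = 0" if "k \<in> K" for k
  proof (rule nearest_point_orthogonal[OF K that])
    show "norm w \<le> norm (w - k)" if "k \<in> K" for k
      using k0[OF csubspace_add[OF K \<open>k0 \<in> K\<close> that]] by (simp add: w_def algebra_simps)
  qed
  \<comment> \<open>\<open>f x w - f w x\<close> lies in the kernel, hence is orthogonal to \<open>w\<close>\<close>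
  have "f x = cinner ((cnj (f w) / complex_of_real ((norm w)\<^sup>2)) *\<^sub>C w) x" for x
  proof -
    have "f x *\<^sub>C w - f w *\<^sub>C x \<in> K" by (simp add: K_def f.diff f_scaleC)
    from w_orth[OF this] have "f x * cinner w w - f w * cinner w x = 0"
      by (simp add: cinner_diff_right cinner_scaleC_right)
    then show ?thesis
      using \<open>w \<noteq> 0\<close> by (simp add: cinner_self cinner_scaleC_left field_simps)
  qed
  then show ?thesis by (rule that)
qed

section \<open>Bounded operators and adjoints\<close>

lemma bounded_clinear_imp_bounded_linear: "bounded_clinear T \<Longrightarrow> bounded_linear T"
  by (simp add: bounded_clinear_def)

lemma bounded_clinear_scaleC: "bounded_clinear T \<Longrightarrow> T (c *\<^sub>C x) = c *\<^sub>C T x"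
  by (simp add: bounded_clinear_def)

lemma bounded_clinear_add: "bounded_clinear T \<Longrightarrow> T (x + y) = T x + T y"
  by (simp add: bounded_clinear_def linear_add bounded_linear.linear)

lemma bounded_clinear_diff: "bounded_clinear T \<Longrightarrow> T (x - y) = T x - T y"
  by (simp add: bounded_clinear_def linear_diff bounded_linear.linear)

lemma bounded_clinear_minus: "bounded_clinear T \<Longrightarrow> T (- x) = - T x"
  by (simp add: bounded_clinear_def linear_neg bounded_linear.linear)

lemma bounded_clinear_zero: "bounded_clinear T \<Longrightarrow> T 0 = 0"
  by (simp add: bounded_clinear_def linear_0 bounded_linear.linear)

lemma bounded_clinear_sum: "bounded_clinear T \<Longrightarrow> T (\<Sum>i\<in>I. f i) = (\<Sum>i\<in>I. T (f i))"
  by (simp add: bounded_clinear_def linear_sum bounded_linear.linear)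

lemma bounded_clinear_scaleR: "bounded_clinear T \<Longrightarrow> T (r *\<^sub>R x) = r *\<^sub>R T x"
  by (simp add: bounded_clinear_scaleC scaleR_scaleC)

lemma bounded_clinearI:
  assumes "\<And>x y. T (x + y) = T x + T y" "\<And>c x. T (c *\<^sub>C x) = c *\<^sub>C T x"
    and "\<And>x. norm (T x) \<le> norm x * K"
  shows "bounded_clinear T"
  unfolding bounded_clinear_def
  using assms by (auto intro!: bounded_linear_intro[where K=K] simp: scaleR_scaleC)

lemma bounded_clinear_compose:
  "bounded_clinear S \<Longrightarrow> bounded_clinear T \<Longrightarrow> bounded_clinear (\<lambda>x. S (T x))"
  unfolding bounded_clinear_def using bounded_linear_compose[of S T] by auto

lemma bounded_clinear_sub:
  "bounded_clinear S \<Longrightarrow> bounded_clinear T \<Longrightarrow> bounded_clinear (\<lambda>x. S x - T x)"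
  unfolding bounded_clinear_def by (auto intro: bounded_linear_sub simp: scaleC_diff_right)

lemma bounded_clinear_funpow: "bounded_clinear T \<Longrightarrow> bounded_clinear (T ^^ k)"
proof (induction k)
  case 0
  then show ?case by (simp add: bounded_clinear_def id_def bounded_linear_ident)
qed (use bounded_clinear_compose in \<open>auto simp: comp_def\<close>)

lemma bounded_clinear_range_csubspace:
  assumes T: "bounded_clinear T"
  shows "csubspace (range T)"
  unfolding csubspace_def
proof (intro conjI ballI allI)
  show "0 \<in> range T" using bounded_clinear_zero[OF T] by (metis rangeI)
  show "x + y \<in> range T" if "x \<in> range T" "y \<in> range T" for x y
    using that by (auto simp flip: bounded_clinear_add[OF T])
  show "c *\<^sub>C x \<in> range T" if "x \<in> range T" for c x
    using that by (auto simp flip: bounded_clinear_scaleC[OF T])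
qed

lemma adjoint_exists:
  assumes T: "bounded_clinear (T::'a::chilbert \<Rightarrow> 'a)"
  shows "\<exists>G. \<forall>x y. cinner (T x) y = cinner x (G y)"
proof -
  have "\<exists>z. \<forall>x. cinner y (T x) = cinner z x" for y
  proof -
    have "bounded_linear (\<lambda>x. cinner y (T x))"
      using bounded_linear_compose[OF bounded_bilinear.bounded_linear_right[OF bounded_bilinear_cinner]
          bounded_clinear_imp_bounded_linear[OF T]] .
    moreover have "cinner y (T (c *\<^sub>C x)) = c * cinner y (T x)" for c x
      by (simp add: bounded_clinear_scaleC[OF T] cinner_scaleC_right)
    ultimately obtain z where "\<And>x. cinner y (T x) = cinner z x"
      using riesz_representation by blast
    then show ?thesis by blast
  qed
  then obtain G where "\<And>y x. cinner y (T x) = cinner (G y) x" by metis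
  then show ?thesis by (metis cinner_commute)
qed

lemma adjoint_eqI:
  assumes "\<And>x y. cinner (T x) y = cinner x (G y)"
  shows "adjoint T = (G::'a::chilbert \<Rightarrow> 'a)"
  unfolding adjoint_def
proof (rule the_equality)
  fix G' assume "\<forall>x y. cinner (T x) y = cinner x (G' y)"
  then have "cinner x (G' y) = cinner x (G y)" for x y using assms by metis
  then show "G' = G" by (intro ext cinner_eq_right) blast
qed (use assms in blast)

lemma cinner_adjoint_right:
  assumes "bounded_clinear (T::'a::chilbert \<Rightarrow> 'a)"
  shows "cinner (T x) y = cinner x (adjoint T y)"
  using adjoint_exists[OF assms] adjoint_eqI by metis

lemma cinner_adjoint_left:
  assumes "bounded_clinear (T::'a::chilbert \<Rightarrow> 'a)"
  shows "cinner (adjoint T x) y = cinner x (T y)"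
  by (metis cinner_adjoint_right[OF assms] cinner_commute)

lemma adjoint_adjoint:
  assumes "bounded_clinear (T::'a::chilbert \<Rightarrow> 'a)"
  shows "adjoint (adjoint T) = T"
  by (rule adjoint_eqI) (rule cinner_adjoint_left[OF assms])

lemma norm_adjoint_le:
  assumes T: "bounded_clinear (T::'a::chilbert \<Rightarrow> 'a)"
    and K: "0 \<le> K" "\<And>x. norm (T x) \<le> K * norm x"
  shows "norm (adjoint T y) \<le> K * norm y"
proof -
  let ?G = "adjoint T"
  have "(norm (?G y))\<^sup>2 = Re (cinner (?G y) (?G y))"
    by (simp add: cinner_self)
  also have "\<dots> = Re (cinner (T (?G y)) y)"
    by (simp add: cinner_adjoint_right[OF T])
  also have "\<dots> \<le> norm (T (?G y)) * norm y"
    using complex_Re_le_cmod cauchy_schwarz order_trans by blast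
  also have "\<dots> \<le> norm (?G y) * (K * norm y)"
    using mult_right_mono[OF K(2)[of "?G y"] norm_ge_zero[of y]] by (simp add: algebra_simps)
  finally have "norm (?G y) * norm (?G y) \<le> norm (?G y) * (K * norm y)"
    by (simp add: power2_eq_square)
  then show ?thesis
    using K(1) by (cases "?G y = 0") (auto simp: mult_le_cancel_left)
qed

lemma bounded_clinear_adjoint:
  assumes T: "bounded_clinear (T::'a::chilbert \<Rightarrow> 'a)"
  shows "bounded_clinear (adjoint T)"
proof -
  obtain K where K: "K > 0" "\<And>x. norm (T x) \<le> norm x * K"
    using bounded_linear.pos_bounded[OF bounded_clinear_imp_bounded_linear[OF T]] by blast
  show ?thesis
  proof (rule bounded_clinearI[where K=K])
    show "norm (adjoint T y) \<le> norm y * K" for y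
      using norm_adjoint_le[OF T, of K y] K by (simp add: mult.commute)
    show "adjoint T (x + y) = adjoint T x + adjoint T y" for x y
      by (rule cinner_eq_right) (simp add: cinner_adjoint_right[OF T, symmetric] cinner_add_right)
    show "adjoint T (c *\<^sub>C x) = c *\<^sub>C adjoint T x" for c x
      by (rule cinner_eq_right)
        (simp add: cinner_adjoint_right[OF T, symmetric] cinner_scaleC_right)
  qed
qed

definition selfadjoint :: "('a::chilbert \<Rightarrow> 'a) \<Rightarrow> bool" where
  "selfadjoint X \<longleftrightarrow> (\<forall>x y. cinner (X x) y = cinner x (X y))"

lemma selfadjoint_funpow: "selfadjoint X \<Longrightarrow> cinner ((X ^^ k) x) y = cinner x ((X ^^ k) y)"
  by (induction k arbitrary: x y) (auto simp: selfadjoint_def funpow_swap1)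

lemma selfadjoint_cinner_real:
  assumes "selfadjoint X"
  shows "Im (cinner x (X x)) = 0"
proof -
  have "cinner x (X x) = cnj (cinner x (X x))"
    using assms cinner_commute unfolding selfadjoint_def by metis
  then show ?thesis by (simp add: complex_eq_iff)
qed

text \<open>Complex polarization; over the reals a rotation by \<open>\<pi>/2\<close> would be a counterexample.\<close>
lemma quadratic_form_eq_0_imp_zero:
  assumes Q: "bounded_clinear Q" and form: "\<And>x. cinner x (Q x) = 0"
  shows "Q y = (0::'a::chilbert)"
proof -
  have sum_0: "cinner x (Q y) + cinner y (Q x) = 0" for x y
    using form[of "x + y"] form[of x] form[of y]
    by (simp add: bounded_clinear_add[OF Q] cinner_add_left cinner_add_right add.commute)
  have "\<i> * (cinner x (Q y) - cinner y (Q x)) = 0" for x y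
    using sum_0[of x "\<i> *\<^sub>C y"]
    by (simp add: bounded_clinear_scaleC[OF Q] cinner_scaleC_left cinner_scaleC_right algebra_simps)
  then have "cinner x (Q y) = 0" for x
    using sum_0[of x y] by (simp add: algebra_simps)
  from this[of "Q y"] show ?thesis by simp
qed

lemma positive_op_selfadjoint:
  assumes R: "positive_op R"
  shows "selfadjoint R"
proof -
  have R_bcl: "bounded_clinear R" using R by (simp add: positive_op_def)
  have "cinner x (R x - adjoint R x) = 0" for x
  proof -
    have "cinner x (adjoint R x) = cnj (cinner x (R x))"
      by (metis cinner_adjoint_right[OF R_bcl] cinner_commute)
    moreover have "Im (cinner x (R x)) = 0" using R by (simp add: positive_op_def)
    ultimately show ?thesis by (simp add: cinner_diff_right complex_eq_iff)
  qed
  then have "R x - adjoint R x = 0" for x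
    by (intro quadratic_form_eq_0_imp_zero[of "\<lambda>x. R x - adjoint R x"]
        bounded_clinear_sub R_bcl bounded_clinear_adjoint)
  then have "adjoint R = R" by auto
  then show ?thesis
    using cinner_adjoint_right[OF R_bcl] by (simp add: selfadjoint_def)
qed

section \<open>The square root of \<open>I - X\<close> for a self-adjoint contraction \<open>X\<close>\<close>

text \<open>Taylor coefficients of \<open>\<surd>(1 - t)\<close>; the square root of \<open>I - X\<close> is the
series \<open>\<Sum>k. sqrt_coeff k *\<^sub>R X\<^sup>k\<close>, which converges absolutely for contractions.\<close>
definition sqrt_coeff :: "nat \<Rightarrow> real" where
  "sqrt_coeff k = ((1/2::real) gchoose k) * (-1)^k"

lemma sqrt_coeff_0 [simp]: "sqrt_coeff 0 = 1"
  by (simp add: sqrt_coeff_def)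

lemma sqrt_coeff_nonpos:
  assumes "k > 0"
  shows "sqrt_coeff k \<le> 0"
proof -
  obtain m where k: "k = Suc m" using assms by (cases k) auto
  have "sqrt_coeff k = (-1/2) * pochhammer (1/2) m / fact k"
    unfolding sqrt_coeff_def gbinomial_pochhammer k
    by (simp add: pochhammer_rec power_mult_distrib[symmetric])
  moreover have "pochhammer (1/2::real) m \<ge> 0" by (rule pochhammer_nonneg) simp
  ultimately show ?thesis by (simp add: divide_nonpos_pos mult_nonpos_nonneg)
qed

lemma sum_sqrt_coeff_nonneg: "(\<Sum>k<n. sqrt_coeff k) \<ge> 0"
proof (cases n)
  case (Suc N)
  have "(\<Sum>k\<le>N. sqrt_coeff k) = (-1)^N * ((1/2::real) - 1 gchoose N)"
    unfolding sqrt_coeff_def by (rule gbinomial_sum_lower_neg)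
  also have "\<dots> = pochhammer (1/2) N / fact N"
    by (simp add: gbinomial_pochhammer power_mult_distrib[symmetric])
  finally show ?thesis
    by (simp add: Suc lessThan_Suc_atMost pochhammer_nonneg)
qed simp

lemma sum_abs_sqrt_coeff_le: "(\<Sum>k<n. \<bar>sqrt_coeff k\<bar>) \<le> 2"
proof -
  have "(\<Sum>k<n. \<bar>sqrt_coeff k\<bar>) = (\<Sum>k<n. (if k = 0 then 2 else 0) - sqrt_coeff k)"
    by (intro sum.cong refl) (simp add: abs_of_nonpos sqrt_coeff_nonpos)
  also have "\<dots> \<le> 2"
    using sum_sqrt_coeff_nonneg[of n] by (simp add: sum_subtractf sum.If_cases)
  finally show ?thesis .
qed

lemma summable_abs_sqrt_coeff: "summable (\<lambda>k. \<bar>sqrt_coeff k\<bar>)"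
  using sum_abs_sqrt_coeff_le by (intro summableI_nonneg_bounded) auto

text \<open>\<open>(\<surd>(1 - t))\<^sup>2 = 1 - t\<close> on the level of coefficients (Vandermonde).\<close>
lemma sqrt_coeff_convolution:
  "(\<Sum>j\<le>n. sqrt_coeff j * sqrt_coeff (n - j)) = (if n = 0 then 1 else if n = 1 then -1 else 0)"
proof -
  have "(\<Sum>j\<le>n. sqrt_coeff j * sqrt_coeff (n - j))
      = (\<Sum>j=0..n. ((1/2::real) gchoose j) * (1/2 gchoose (n - j))) * (-1)^n"
    unfolding sqrt_coeff_def sum_distrib_right atMost_atLeast0
    by (rule sum.cong) (auto simp: power_add[symmetric])
  also have "\<dots> = (1 gchoose n) * (-1)^n" by (simp add: gbinomial_Vandermonde)
  also have "\<dots> = (if n = 0 then 1 else if n = 1 then -1 else 0)"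
    using binomial_gbinomial[of 1 n, where 'a=real] by (cases n) (auto simp: binomial_eq_0)
  finally show ?thesis .
qed

definition contraction :: "('a::chilbert \<Rightarrow> 'a) \<Rightarrow> bool" where
  "contraction X \<longleftrightarrow> bounded_clinear X \<and> (\<forall>x. norm (X x) \<le> norm x)"

definition sqrt_series :: "('a::chilbert \<Rightarrow> 'a) \<Rightarrow> 'a \<Rightarrow> 'a" where
  "sqrt_series X x = (\<Sum>k. sqrt_coeff k *\<^sub>R (X ^^ k) x)"

definition sqrt_partial_sum :: "('a::chilbert \<Rightarrow> 'a) \<Rightarrow> nat \<Rightarrow> 'a \<Rightarrow> 'a" where
  "sqrt_partial_sum X n x = (\<Sum>k<n. sqrt_coeff k *\<^sub>R (X ^^ k) x)"

lemma contraction_funpow: "contraction X \<Longrightarrow> norm ((X ^^ k) x) \<le> norm x"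
  by (induction k) (auto simp: contraction_def intro: order_trans)

lemma contraction_bounded_clinear_funpow: "contraction X \<Longrightarrow> bounded_clinear (X ^^ k)"
  by (simp add: contraction_def bounded_clinear_funpow)

lemma summable_sqrt_series:
  assumes X: "contraction X"
  shows "summable (\<lambda>k. sqrt_coeff k *\<^sub>R (X ^^ k) x)"
proof (rule summable_norm_cancel)
  show "summable (\<lambda>k. norm (sqrt_coeff k *\<^sub>R (X ^^ k) x))"
    using summable_mult2[OF summable_abs_sqrt_coeff, of "norm x"]
    by (rule summable_comparison_test'[where N=0])
      (simp add: contraction_funpow[OF X] mult_left_mono)
qed

lemma sqrt_partial_sum_tendsto:
  "contraction X \<Longrightarrow> (\<lambda>n. sqrt_partial_sum X n x) \<longlonglongrightarrow> sqrt_series X x"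
  unfolding sqrt_partial_sum_def sqrt_series_def by (rule summable_LIMSEQ[OF summable_sqrt_series])

lemma norm_sqrt_partial_sum_le:
  assumes X: "contraction X"
  shows "norm (sqrt_partial_sum X n x) \<le> 2 * norm x"
proof -
  have "norm (sqrt_partial_sum X n x) \<le> (\<Sum>k<n. \<bar>sqrt_coeff k\<bar> * norm x)"
    unfolding sqrt_partial_sum_def
    by (rule order_trans[OF norm_sum sum_mono]) (simp add: contraction_funpow[OF X] mult_left_mono)
  also have "\<dots> \<le> 2 * norm x"
    using sum_abs_sqrt_coeff_le[of n] by (simp add: sum_distrib_right[symmetric] mult_right_mono)
  finally show ?thesis .
qed

lemma sqrt_partial_sum_diff:
  "contraction X \<Longrightarrow> sqrt_partial_sum X n (x - y) = sqrt_partial_sum X n x - sqrt_partial_sum X n y"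
  unfolding sqrt_partial_sum_def
  by (simp add: bounded_clinear_diff[OF contraction_bounded_clinear_funpow] scaleR_diff_right
      sum_subtractf)

lemma sqrt_coeff_convolution_series:
  fixes X :: "'a::real_vector \<Rightarrow> 'a"
  assumes "n \<ge> 2"
  shows "(\<Sum>m<n. (\<Sum>i\<le>m. sqrt_coeff i * sqrt_coeff (m - i)) *\<^sub>R (X ^^ m) x) = x - X x"
proof -
  have "(\<Sum>m<n. (\<Sum>i\<le>m. sqrt_coeff i * sqrt_coeff (m - i)) *\<^sub>R (X ^^ m) x)
      = (\<Sum>m\<in>{0..<n}. (if m = 0 then 1 else if m = 1 then -1 else 0) *\<^sub>R (X ^^ m) x)"
    by (simp add: sqrt_coeff_convolution atLeast0LessThan)
  also have "\<dots> = x + (- X x + (\<Sum>m\<in>{2..<n}. (if m = 0 then 1 else if m = 1 then -1 else 0) *\<^sub>R (X ^^ m) x))"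
    using assms by (simp add: sum.atLeast_Suc_lessThan numeral_2_eq_2)
  also have "(\<Sum>m\<in>{2..<n}. (if m = 0 then 1 else if m = 1 then -1 else 0) *\<^sub>R (X ^^ m) x) = 0"
    by (intro sum.neutral) auto
  finally show ?thesis by simp
qed

text \<open>Squaring a partial sum reproduces \<open>x - X x\<close> from the terms with \<open>j + k < n\<close>;
the remaining terms are bounded by the corresponding tail of \<open>(\<Sum>\<bar>c\<^sub>k\<bar>)\<^sup>2\<close>.\<close>
lemma norm_sqrt_partial_sum_squared_diff_le:
  assumes X: "contraction X" and n: "n \<ge> 2"
  shows "norm (sqrt_partial_sum X n (sqrt_partial_sum X n x) - (x - X x))
     \<le> norm x * ((\<Sum>k<n. \<bar>sqrt_coeff k\<bar>)\<^sup>2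
                  - (\<Sum>m<n. \<Sum>i\<le>m. \<bar>sqrt_coeff i\<bar> * \<bar>sqrt_coeff (m - i)\<bar>))"
proof -
  define g where "g = (\<lambda>(j, k). (sqrt_coeff j * sqrt_coeff k) *\<^sub>R (X ^^ (j + k)) x)"
  define a where "a = (\<lambda>(j, k). \<bar>sqrt_coeff j\<bar> * \<bar>sqrt_coeff k\<bar>)"
  define Q where "Q = {..<n} \<times> {..<n}"
  define T where "T = {(i, j). i + j < n}"
  have TQ: "T \<subseteq> Q" and "finite Q" by (auto simp: T_def Q_def)
  have "sqrt_partial_sum X n (sqrt_partial_sum X n x) = sum g Q"
    unfolding sqrt_partial_sum_def g_def Q_def
    by (simp add: bounded_clinear_sum[OF contraction_bounded_clinear_funpow[OF X]]
        bounded_clinear_scaleR[OF contraction_bounded_clinear_funpow[OF X]]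
        scaleR_sum_right funpow_add sum.cartesian_product)
  also have "\<dots> = sum g (Q - T) + sum g T" by (rule sum.subset_diff[OF TQ \<open>finite Q\<close>])
  also have "sum g T = x - X x"
    unfolding T_def sum.triangle_reindex[of "\<lambda>i j. g (i, j)" n, simplified]
    using sqrt_coeff_convolution_series[OF n, of X x] by (simp add: g_def scaleR_sum_left)
  finally have "norm (sqrt_partial_sum X n (sqrt_partial_sum X n x) - (x - X x)) = norm (sum g (Q - T))"
    by simp
  also have "\<dots> \<le> (\<Sum>p\<in>Q - T. norm x * a p)"
  proof (rule order_trans[OF norm_sum sum_mono], clarify)
    fix j k
    have "\<bar>sqrt_coeff j\<bar> * \<bar>sqrt_coeff k\<bar> * norm ((X ^^ (j + k)) x)
        \<le> \<bar>sqrt_coeff j\<bar> * \<bar>sqrt_coeff k\<bar> * norm x"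
      by (intro mult_left_mono contraction_funpow[OF X]) simp
    then show "norm (g (j, k)) \<le> norm x * a (j, k)"
      by (simp add: g_def a_def abs_mult mult.commute)
  qed
  also have "\<dots> = norm x * (sum a Q - sum a T)"
    by (simp add: sum_distrib_left[symmetric] sum.subset_diff[OF TQ \<open>finite Q\<close>])
  also have "sum a Q = (\<Sum>k<n. \<bar>sqrt_coeff k\<bar>)\<^sup>2"
    unfolding Q_def a_def power2_eq_square sum_product by (simp add: sum.cartesian_product)
  also have "sum a T = (\<Sum>m<n. \<Sum>i\<le>m. \<bar>sqrt_coeff i\<bar> * \<bar>sqrt_coeff (m - i)\<bar>)"
    unfolding T_def a_def by (rule sum.triangle_reindex)
  finally show ?thesis .
qed

lemma sqrt_coeff_squared_error_tendsto:
  "(\<lambda>n. (\<Sum>k<n. \<bar>sqrt_coeff k\<bar>)\<^sup>2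
        - (\<Sum>m<n. \<Sum>i\<le>m. \<bar>sqrt_coeff i\<bar> * \<bar>sqrt_coeff (m - i)\<bar>)) \<longlonglongrightarrow> 0"
proof -
  define s where "s = (\<Sum>k. \<bar>sqrt_coeff k\<bar>)"
  have "summable (\<lambda>k. norm \<bar>sqrt_coeff k\<bar>)" using summable_abs_sqrt_coeff by simp
  from Cauchy_product_sums[OF this this]
  have "(\<lambda>n. \<Sum>m<n. \<Sum>i\<le>m. \<bar>sqrt_coeff i\<bar> * \<bar>sqrt_coeff (m - i)\<bar>) \<longlonglongrightarrow> s * s"
    by (simp add: sums_def s_def)
  moreover have "(\<lambda>n. \<Sum>k<n. \<bar>sqrt_coeff k\<bar>) \<longlonglongrightarrow> s"
    unfolding s_def by (rule summable_LIMSEQ[OF summable_abs_sqrt_coeff])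
  ultimately have "(\<lambda>n. (\<Sum>k<n. \<bar>sqrt_coeff k\<bar>)\<^sup>2
        - (\<Sum>m<n. \<Sum>i\<le>m. \<bar>sqrt_coeff i\<bar> * \<bar>sqrt_coeff (m - i)\<bar>)) \<longlonglongrightarrow> s\<^sup>2 - s * s"
    by (intro tendsto_intros)
  then show ?thesis by (simp add: power2_eq_square)
qed

lemma sqrt_series_squared:
  assumes X: "contraction X"
  shows "sqrt_series X (sqrt_series X x) = x - X x"
proof -
  define v where "v = sqrt_series X x"
  have "(\<lambda>n. sqrt_partial_sum X n (sqrt_partial_sum X n x)) \<longlonglongrightarrow> x - X x"
  proof (rule Lim_null_comparison[THEN LIM_zero_cancel])
    show "\<forall>\<^sub>F n in sequentially. norm (sqrt_partial_sum X n (sqrt_partial_sum X n x) - (x - X x))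
       \<le> norm x * ((\<Sum>k<n. \<bar>sqrt_coeff k\<bar>)\<^sup>2
                  - (\<Sum>m<n. \<Sum>i\<le>m. \<bar>sqrt_coeff i\<bar> * \<bar>sqrt_coeff (m - i)\<bar>))"
      using eventually_ge_at_top[of 2]
      by eventually_elim (rule norm_sqrt_partial_sum_squared_diff_le[OF X])
    show "(\<lambda>n. norm x * ((\<Sum>k<n. \<bar>sqrt_coeff k\<bar>)\<^sup>2
                  - (\<Sum>m<n. \<Sum>i\<le>m. \<bar>sqrt_coeff i\<bar> * \<bar>sqrt_coeff (m - i)\<bar>))) \<longlonglongrightarrow> 0"
      using tendsto_mult_right_zero[OF sqrt_coeff_squared_error_tendsto] .
  qed
  moreover have "(\<lambda>n. sqrt_partial_sum X n v - sqrt_partial_sum X n (sqrt_partial_sum X n x)) \<longlonglongrightarrow> 0"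
  proof (rule Lim_null_comparison)
    show "\<forall>\<^sub>F n in sequentially. norm (sqrt_partial_sum X n v
        - sqrt_partial_sum X n (sqrt_partial_sum X n x)) \<le> 2 * norm (v - sqrt_partial_sum X n x)"
      using norm_sqrt_partial_sum_le[OF X] by (simp add: sqrt_partial_sum_diff[OF X, symmetric])
    have "(\<lambda>n. sqrt_partial_sum X n x - v) \<longlonglongrightarrow> 0"
      using sqrt_partial_sum_tendsto[OF X, of x] by (simp add: v_def LIM_zero_iff)
    from tendsto_mult_right_zero[OF tendsto_norm_zero[OF this], of 2]
    show "(\<lambda>n. 2 * norm (v - sqrt_partial_sum X n x)) \<longlonglongrightarrow> 0"
      by (simp add: norm_minus_commute)
  qed
  ultimately have "(\<lambda>n. sqrt_partial_sum X n v) \<longlonglongrightarrow> x - X x"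
    using tendsto_add by fastforce
  with sqrt_partial_sum_tendsto[OF X] show ?thesis
    unfolding v_def[symmetric] by (rule LIMSEQ_unique)
qed

lemma sqrt_series_intertwine:
  assumes T: "bounded_linear T" and X1: "contraction X1" and X2: "contraction X2"
    and intertwine: "\<And>y. T (X1 y) = X2 (T y)"
  shows "T (sqrt_series X1 x) = sqrt_series X2 (T x)"
proof -
  have "T ((X1 ^^ k) y) = (X2 ^^ k) (T y)" for k y
    using intertwine by (induction k arbitrary: y) auto
  then show ?thesis
    unfolding sqrt_series_def
    by (simp add: bounded_linear.suminf[OF T summable_sqrt_series[OF X1]]
        linear_simps(5)[OF T])
qed

lemma bounded_clinear_sqrt_series:
  assumes X: "contraction X"
  shows "bounded_clinear (sqrt_series X)"
proof (rule bounded_clinearI[where K=2])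
  show "sqrt_series X (x + y) = sqrt_series X x + sqrt_series X y" for x y
    unfolding sqrt_series_def
    by (simp add: suminf_add[OF summable_sqrt_series[OF X] summable_sqrt_series[OF X]]
        bounded_clinear_add[OF contraction_bounded_clinear_funpow[OF X]] scaleR_add_right)
  show "sqrt_series X (c *\<^sub>C x) = c *\<^sub>C sqrt_series X x" for c x
    using sqrt_series_intertwine[OF bounded_linear_scaleC X X, of c x]
    by (simp add: bounded_clinear_scaleC[OF X[unfolded contraction_def, THEN conjunct1]])
  show "norm (sqrt_series X x) \<le> norm x * 2" for x
  proof (rule LIMSEQ_le_const2)
    show "(\<lambda>n. norm (sqrt_partial_sum X n x)) \<longlonglongrightarrow> norm (sqrt_series X x)"
      by (intro tendsto_intros sqrt_partial_sum_tendsto[OF X])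
  qed (use norm_sqrt_partial_sum_le[OF X] in \<open>auto simp: mult.commute\<close>)
qed

lemma sqrt_partial_sum_nonneg:
  assumes X: "contraction X" and "selfadjoint X"
  shows "Im (cinner x (sqrt_partial_sum X n x)) = 0 \<and> 0 \<le> Re (cinner x (sqrt_partial_sum X n x))"
proof -
  define r where "r k = Re (cinner x ((X ^^ k) x))" for k
  have partial: "cinner x (sqrt_partial_sum X n x) = complex_of_real (\<Sum>k<n. sqrt_coeff k * r k)"
    unfolding sqrt_partial_sum_def
    using selfadjoint_cinner_real[of "X ^^ _" x] selfadjoint_funpow[OF \<open>selfadjoint X\<close>]
    by (simp add: cinner_sum_right cinner_scaleR_right r_def complex_eq_iff scaleR_conv_of_real
        selfadjoint_def)
  \<comment> \<open>\<open>r 0 = \<parallel>x\<parallel>\<^sup>2\<close> dominates every \<open>r k\<close>, and only \<open>sqrt_coeff 0\<close> is positive\<close>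
  have "r k \<le> (norm x)\<^sup>2" for k
  proof -
    have "r k \<le> norm x * norm ((X ^^ k) x)"
      unfolding r_def using complex_Re_le_cmod cauchy_schwarz order_trans by blast
    also have "\<dots> \<le> (norm x)\<^sup>2"
      by (simp add: power2_eq_square mult_left_mono contraction_funpow[OF X])
    finally show ?thesis .
  qed
  then have "sqrt_coeff k * (norm x)\<^sup>2 \<le> sqrt_coeff k * r k" for k
    by (cases "k = 0") (simp_all add: r_def cinner_self mult_left_mono_neg sqrt_coeff_nonpos)
  then have "(\<Sum>k<n. sqrt_coeff k * (norm x)\<^sup>2) \<le> (\<Sum>k<n. sqrt_coeff k * r k)"
    by (rule sum_mono)
  moreover have "0 \<le> (\<Sum>k<n. sqrt_coeff k * (norm x)\<^sup>2)"
    using sum_sqrt_coeff_nonneg[of n] by (simp add: sum_distrib_right[symmetric])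
  ultimately show ?thesis
    by (simp add: partial)
qed

lemma positive_op_sqrt_series:
  assumes X: "contraction X" and "selfadjoint X"
  shows "positive_op (sqrt_series X)"
  unfolding positive_op_def
proof (intro conjI allI bounded_clinear_sqrt_series[OF X])
  fix x
  have lim: "(\<lambda>n. cinner x (sqrt_partial_sum X n x)) \<longlonglongrightarrow> cinner x (sqrt_series X x)"
    by (intro tendsto_intros sqrt_partial_sum_tendsto[OF X])
  have "(\<lambda>n. Im (cinner x (sqrt_partial_sum X n x))) \<longlonglongrightarrow> Im (cinner x (sqrt_series X x))"
    using lim by (rule tendsto_Im)
  then show "Im (cinner x (sqrt_series X x)) = 0"
    using sqrt_partial_sum_nonneg[OF assms] LIMSEQ_const_iff by (metis (no_types, lifting) ext)
  show "0 \<le> Re (cinner x (sqrt_series X x))"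
    using tendsto_Re[OF lim] sqrt_partial_sum_nonneg[OF assms]
    by (intro LIMSEQ_le_const) auto
qed

section \<open>Uniqueness of positive square roots\<close>

lemma selfadjoint_cube_eq_0:
  assumes T: "selfadjoint T" and cube: "\<And>x. T (T (T x)) = 0"
  shows "T x = 0"
proof -
  have "cinner (T (T x)) (T (T x)) = cinner (T x) (T (T (T x)))"
    using T by (simp add: selfadjoint_def)
  then have "T (T x) = 0" by (simp add: cube)
  moreover have "cinner (T x) (T x) = cinner x (T (T x))"
    using T by (simp add: selfadjoint_def)
  ultimately show ?thesis by simp
qed

lemma positive_op_eq_of_squares_eq:
  assumes R: "positive_op R" and S: "positive_op S"
    and commute: "\<And>x. R (S x) = S (R x)" and squares: "\<And>x. R (R x) = S (S x)"
  shows "R = S"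
proof -
  have R_bcl: "bounded_clinear R" and S_bcl: "bounded_clinear S"
    using R S by (simp_all add: positive_op_def)
  define T where "T x = R x - S x" for x
  have T_bcl: "bounded_clinear T"
    unfolding T_def[abs_def] by (rule bounded_clinear_sub[OF R_bcl S_bcl])
  have T_sa: "selfadjoint T"
    using positive_op_selfadjoint[OF R] positive_op_selfadjoint[OF S]
    by (simp add: selfadjoint_def T_def cinner_diff_left cinner_diff_right)
  \<comment> \<open>\<open>(R + S) T = R\<^sup>2 - S\<^sup>2 = 0\<close>, since \<open>R\<close> and \<open>S\<close> commute\<close>
  have S_T: "S (T x) = - R (T x)" for x
    using squares[of x] commute[of x]
    by (simp add: T_def bounded_clinear_diff[OF R_bcl] bounded_clinear_diff[OF S_bcl]
        eq_neg_iff_add_eq_0)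
  \<comment> \<open>so \<open>\<langle>T x, R T x\<rangle>\<close> is both \<open>\<ge> 0\<close> and \<open>\<le> 0\<close>\<close>
  have form_0: "cinner (T x) (R (T x)) = 0" for x
  proof -
    have "0 \<le> Re (cinner (T x) (R (T x)))" "0 \<le> Re (cinner (T x) (S (T x)))"
      "Im (cinner (T x) (R (T x))) = 0"
      using R S by (simp_all add: positive_op_def)
    then show ?thesis by (simp add: S_T cinner_minus_right complex_eq_iff)
  qed
  have TRT: "T (R (T x)) = 0" for x
  proof (rule quadratic_form_eq_0_imp_zero[of "\<lambda>x. T (R (T x))"])
    show "bounded_clinear (\<lambda>x. T (R (T x)))"
      by (rule bounded_clinear_compose[OF T_bcl bounded_clinear_compose[OF R_bcl T_bcl]])
    show "cinner y (T (R (T y))) = 0" for y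
      using T_sa form_0[of y] by (simp add: selfadjoint_def)
  qed
  have "T (T (T x)) = 0" for x
  proof -
    have "T (T (T x)) = T (R (T x)) - T (S (T x))"
      by (subst T_def[of "T x"]) (rule bounded_clinear_diff[OF T_bcl])
    then show ?thesis
      by (simp add: TRT S_T bounded_clinear_minus[OF T_bcl])
  qed
  then show ?thesis
    using selfadjoint_cube_eq_0[OF T_sa] by (auto simp: T_def)
qed

lemma op_sqrt_eq_sqrt_series:
  assumes X: "contraction X" and "selfadjoint X"
  shows "op_sqrt (\<lambda>x. x - X x) = sqrt_series X"
  unfolding op_sqrt_def
proof (rule the_equality)
  show "positive_op (sqrt_series X) \<and> sqrt_series X \<circ> sqrt_series X = (\<lambda>x. x - X x)"
    using positive_op_sqrt_series[OF assms] sqrt_series_squared[OF X] by (auto simp: comp_def)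
  fix S assume S: "positive_op S \<and> S \<circ> S = (\<lambda>x. x - X x)"
  then have S_bcl: "bounded_clinear S" by (simp add: positive_op_def)
  have S_S: "S (S y) = y - X y" for y
    using S by (simp add: fun_eq_iff)
  then have X_eq: "X y = y - S (S y)" for y
    by simp
  have "S (X y) = X (S y)" for y
    unfolding X_eq[of y] X_eq[of "S y"] by (rule bounded_clinear_diff[OF S_bcl])
  then have "S (sqrt_series X y) = sqrt_series X (S y)" for y
    by (rule sqrt_series_intertwine[OF bounded_clinear_imp_bounded_linear[OF S_bcl] X X])
  moreover have "S (S y) = sqrt_series X (sqrt_series X y)" for y
    by (simp add: S_S sqrt_series_squared[OF X])
  ultimately show "S = sqrt_series X"
    using S positive_op_sqrt_series[OF assms] positive_op_eq_of_squares_eq by metis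
qed

section \<open>Defect operators and defect spaces\<close>

lemma contraction_adjoint: "contraction P \<Longrightarrow> contraction (adjoint P)"
  using norm_adjoint_le[of P 1] bounded_clinear_adjoint[of P] by (simp add: contraction_def)

lemma contraction_compose:
  "contraction S \<Longrightarrow> contraction T \<Longrightarrow> contraction (\<lambda>x. S (T x))"
  unfolding contraction_def by (blast intro: bounded_clinear_compose order_trans)

lemma selfadjoint_adjoint_compose:
  "bounded_clinear P \<Longrightarrow> selfadjoint (\<lambda>x. adjoint P (P x))"
  by (simp add: selfadjoint_def cinner_adjoint_left cinner_adjoint_right)

lemma contraction_adjoint_compose: "contraction P \<Longrightarrow> contraction (\<lambda>x. adjoint P (P x))"
  by (rule contraction_compose[OF contraction_adjoint])

lemma contraction_compose_adjoint: "contraction P \<Longrightarrow> contraction (\<lambda>x. P (adjoint P x))"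
  by (rule contraction_compose[OF _ contraction_adjoint])

lemma defect_op_eq_sqrt_series:
  assumes P: "contraction P"
  shows "defect_op P = sqrt_series (\<lambda>x. adjoint P (P x))"
  unfolding defect_op_def using P
  by (intro op_sqrt_eq_sqrt_series contraction_adjoint_compose selfadjoint_adjoint_compose)
    (simp_all add: contraction_def)

lemma defect_op_adjoint_eq_sqrt_series:
  assumes P: "contraction P"
  shows "defect_op (adjoint P) = sqrt_series (\<lambda>x. P (adjoint P x))"
proof -
  have "bounded_clinear P" using P by (simp add: contraction_def)
  then show ?thesis
    using defect_op_eq_sqrt_series[OF contraction_adjoint[OF P]] by (simp add: adjoint_adjoint)
qed

lemma positive_defect_op: "contraction P \<Longrightarrow> positive_op (defect_op P)"
  by (auto simp: defect_op_eq_sqrt_series contraction_def intro!: positive_op_sqrt_series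
      contraction_adjoint_compose selfadjoint_adjoint_compose)

lemma bounded_clinear_defect_op: "contraction P \<Longrightarrow> bounded_clinear (defect_op P)"
  using positive_defect_op unfolding positive_op_def by blast

lemma defect_op_adjoint_intertwine:
  assumes P: "contraction P"
  shows "defect_op (adjoint P) (P x) = P (defect_op P x)"
proof -
  have P_bcl: "bounded_clinear P" using P by (simp add: contraction_def)
  have "P (sqrt_series (\<lambda>x. adjoint P (P x)) x) = sqrt_series (\<lambda>x. P (adjoint P x)) (P x)"
    by (intro sqrt_series_intertwine bounded_clinear_imp_bounded_linear[OF P_bcl]
        contraction_adjoint_compose contraction_compose_adjoint P) simp
  then show ?thesis
    by (simp add: defect_op_eq_sqrt_series[OF P] defect_op_adjoint_eq_sqrt_series[OF P])
qed

lemma defect_op_inverse_intertwine: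
  assumes P: "contraction P" and Q: "bounded_clinear Q" and PQ: "\<And>x. P (Q x) = x"
    and QP: "\<And>x. Q (P x) = x"
  shows "defect_op P (Q x) = Q (defect_op (adjoint P) x)"
proof -
  have "Q (sqrt_series (\<lambda>x. P (adjoint P x)) x) = sqrt_series (\<lambda>x. adjoint P (P x)) (Q x)"
    by (intro sqrt_series_intertwine bounded_clinear_imp_bounded_linear[OF Q]
        contraction_adjoint_compose contraction_compose_adjoint P) (simp add: PQ QP)
  then show ?thesis
    by (simp add: defect_op_eq_sqrt_series[OF P] defect_op_adjoint_eq_sqrt_series[OF P])
qed

lemma csubspace_defect_space: "contraction P \<Longrightarrow> csubspace (defect_space P)"
  unfolding defect_space_def
  by (intro csubspace_closure bounded_clinear_range_csubspace bounded_clinear_defect_op)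

lemma image_defect_space_subset:
  assumes T: "bounded_clinear T" and intertwine: "\<And>x. T (D1 x) = D2 (T' x)"
  shows "T ` closure (range D1) \<subseteq> closure (range D2)"
proof (rule image_closure_subset)
  show "continuous_on (closure (range D1)) T"
    by (rule linear_continuous_on[OF bounded_clinear_imp_bounded_linear[OF T]])
  show "T ` range D1 \<subseteq> closure (range D2)"
    using intertwine closure_subset by fastforce
qed simp

lemma image_defect_space_invertible:
  assumes P: "contraction P" and "invertible_op P"
  shows "P ` defect_space P = defect_space (adjoint P)"
proof -
  obtain Q where Q: "bounded_clinear Q" and PQ: "\<And>x. P (Q x) = x" and QP: "\<And>x. Q (P x) = x"
    using \<open>invertible_op P\<close> unfolding invertible_op_def by (metis comp_apply id_apply)
  have "P ` defect_space P \<subseteq> defect_space (adjoint P)"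
    unfolding defect_space_def using P
    by (intro image_defect_space_subset[where T'=P]) (auto simp: contraction_def
        defect_op_adjoint_intertwine)
  moreover have "Q ` defect_space (adjoint P) \<subseteq> defect_space P"
    unfolding defect_space_def
    by (intro image_defect_space_subset[OF Q, where T'=Q])
      (simp add: defect_op_inverse_intertwine[OF P Q PQ QP])
  then have "v \<in> P ` defect_space P" if "v \<in> defect_space (adjoint P)" for v
    using that PQ[of v] by (metis image_eqI image_subset_iff)
  ultimately show ?thesis by blast
qed

section \<open>Fundamental operators\<close>

lemma op_on_mem: "op_on D F \<Longrightarrow> x \<in> D \<Longrightarrow> F x \<in> D"
  by (simp add: op_on_def)

lemma op_on_diff:
  assumes "csubspace D" "op_on D F" "x \<in> D" "y \<in> D"
  shows "F (x - y) = F x - F y"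
proof -
  have "F x = F ((x - y) + y)" by simp
  also have "\<dots> = F (x - y) + F y"
    using assms csubspace_diff unfolding op_on_def by blast
  finally show ?thesis by simp
qed

lemma op_on_continuous_on:
  assumes D: "csubspace D" and F: "op_on D F"
  shows "continuous_on D F"
proof -
  obtain K where K: "\<And>x. x \<in> D \<Longrightarrow> norm (F x) \<le> K * norm x"
    using F unfolding op_on_def by blast
  have "dist (F x) (F y) \<le> max K 0 * dist x y" if "x \<in> D" "y \<in> D" for x y
  proof -
    have "dist (F x) (F y) = norm (F (x - y))"
      by (simp add: dist_norm op_on_diff[OF D F that])
    also have "\<dots> \<le> max K 0 * norm (x - y)"
      using K[OF csubspace_diff[OF D that]] by (smt (verit) mult_right_mono norm_ge_zero)
    finally show ?thesis by (simp add: dist_norm)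
  qed
  then have "(max K 0)-lipschitz_on D F" by (intro lipschitz_onI) auto
  then show ?thesis by (rule lipschitz_on_continuous_on)
qed

lemma fundamental_relation_range:
  assumes P: "bounded_clinear P" and Si: "bounded_clinear Si" and Sj: "bounded_clinear Sj"
    and commute: "\<And>y. Si (P y) = P (Si y)"
    and E: "selfadjoint E" and intertwine: "\<And>y. E (P y) = P (D y)"
    and A: "\<And>x. Si x - adjoint Sj (P x) = D (Ai (D x))"
    and B: "\<And>w. adjoint Si w - Sj (adjoint P w) = E (Bi (E w))"
  shows "cinner (P (Ai (D x))) (E w) = cinner (P (D x)) (Bi (E w))"
proof -
  have "cinner (P (Ai (D x))) (E w) = cinner (E (P (Ai (D x)))) w"
    using E by (simp add: selfadjoint_def)
  also have "\<dots> = cinner (P (Si x - adjoint Sj (P x))) w"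
    by (simp add: intertwine A)
  also have "\<dots> = cinner (P x) (adjoint Si w - Sj (adjoint P w))"
    by (simp add: bounded_clinear_diff[OF P] commute[symmetric] cinner_diff_left cinner_diff_right
        cinner_adjoint_right[OF Si] cinner_adjoint_right[OF P] cinner_adjoint_left[OF Sj])
  also have "\<dots> = cinner (P (D x)) (Bi (E w))"
    using E by (simp add: B selfadjoint_def intertwine[symmetric])
  finally show ?thesis .
qed

lemma fundamental_relation_closure:
  assumes P: "bounded_clinear P"
    and D1: "bounded_clinear D1" and D2: "bounded_clinear D2"
    and Ai: "op_on (closure (range D1)) Ai" and Bi: "op_on (closure (range D2)) Bi"
    and range: "\<And>x w. cinner (P (Ai (D1 x))) (D2 w) = cinner (P (D1 x)) (Bi (D2 w))"
    and u: "u \<in> closure (range D1)" and v: "v \<in> closure (range D2)"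
  shows "cinner (P (Ai u)) v = cinner (P u) (Bi v)"
proof -
  have cont_P: "continuous_on U P" for U
    by (rule linear_continuous_on[OF bounded_clinear_imp_bounded_linear[OF P]])
  have cont_Ai: "continuous_on (closure (range D1)) Ai"
    by (intro op_on_continuous_on[OF _ Ai] csubspace_closure bounded_clinear_range_csubspace D1)
  have cont_Bi: "continuous_on (closure (range D2)) Bi"
    by (intro op_on_continuous_on[OF _ Bi] csubspace_closure bounded_clinear_range_csubspace D2)
  \<comment> \<open>extend by continuity, first in \<open>u\<close>, then in \<open>v\<close>\<close>
  have on_range: "cinner (P (Ai u)) (D2 w) - cinner (P u) (Bi (D2 w)) = 0" for w
  proof (rule continuous_constant_on_closure[OF _ _ u])
    have "continuous_on (closure (range D1)) (\<lambda>u. P (Ai u))"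
      by (rule continuous_on_compose2[OF cont_P[of UNIV] cont_Ai]) simp
    then show "continuous_on (closure (range D1))
        (\<lambda>u. cinner (P (Ai u)) (D2 w) - cinner (P u) (Bi (D2 w)))"
      by (intro continuous_on_diff continuous_on_cinner continuous_on_const cont_P)
  qed (auto simp: range)
  have "continuous_on (closure (range D2)) (\<lambda>v. cinner (P (Ai u)) v - cinner (P u) (Bi v))"
    by (intro continuous_on_diff continuous_on_cinner continuous_on_const continuous_on_id cont_Bi)
  then have "cinner (P (Ai u)) v - cinner (P u) (Bi v) = 0"
    by (rule continuous_constant_on_closure[OF _ _ v]) (use on_range in auto)
  then show ?thesis by simp
qed

lemma fundamental_tuples_relation:
  assumes P: "contraction P" and S: "commuting_tuple n S P"
    and A: "fundamental_tuple n S P A"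
    and B: "fundamental_tuple n (\<lambda>i. adjoint (S i)) (adjoint P) B"
    and i: "i \<in> {1..n-1}" and u: "u \<in> defect_space P" and v: "v \<in> defect_space (adjoint P)"
  shows "cinner (P (A i u)) v = cinner (P u) (B i v)"
proof (rule fundamental_relation_closure[OF _ _ _ _ _ _ u[unfolded defect_space_def]
      v[unfolded defect_space_def]])
  have n_i: "n - i \<in> {1..n-1}" using i by auto
  have P_bcl: "bounded_clinear P" and Si: "bounded_clinear (S i)"
    and Sj: "bounded_clinear (S (n - i))" and commute: "\<And>y. S i (P y) = P (S i y)"
    using S i n_i unfolding commuting_tuple_def by (auto simp: fun_eq_iff)
  show "bounded_clinear P" by (rule P_bcl)
  show "bounded_clinear (defect_op P)" "bounded_clinear (defect_op (adjoint P))"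
    using P by (simp_all add: bounded_clinear_defect_op contraction_adjoint)
  show "op_on (closure (range (defect_op P))) (A i)"
    "op_on (closure (range (defect_op (adjoint P)))) (B i)"
    using A B i unfolding fundamental_tuple_def defect_space_def by blast+
  show "cinner (P (A i (defect_op P x))) (defect_op (adjoint P) w)
      = cinner (P (defect_op P x)) (B i (defect_op (adjoint P) w))" for x w
  proof (rule fundamental_relation_range[where D="defect_op P" and E="defect_op (adjoint P)"
        and Ai="A i" and Bi="B i", OF P_bcl Si Sj commute])
    show "selfadjoint (defect_op (adjoint P))"
      by (intro positive_op_selfadjoint positive_defect_op contraction_adjoint P)
    show "defect_op (adjoint P) (P y) = P (defect_op P y)" for y
      by (rule defect_op_adjoint_intertwine[OF P])
    show "S i x - adjoint (S (n - i)) (P x) = defect_op P (A i (defect_op P x))" for x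
      using A i unfolding fundamental_tuple_def by blast
    show "adjoint (S i) w - S (n - i) (adjoint P w)
        = defect_op (adjoint P) (B i (defect_op (adjoint P) w))" for w
      using B i adjoint_adjoint[OF Sj] unfolding fundamental_tuple_def by (metis (no_types))
  qed
qed

text \<open>Under the relation \<open>\<langle>P A\<^sub>k u, v\<rangle> = \<langle>P u, B\<^sub>k v\<rangle>\<close> the commutator
\<open>[A\<^sub>1, A\<^sub>2]\<close> is carried to \<open>[B\<^sub>2, B\<^sub>1]\<close>.\<close>
lemma commute_on_iff_of_relation:
  assumes P: "bounded_clinear P" "inj P" and image: "P ` D1 = D2"
    and D1: "csubspace D1" and D2: "csubspace D2"
    and A1: "op_on D1 A1" and A2: "op_on D1 A2" and B1: "op_on D2 B1" and B2: "op_on D2 B2"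
    and rel1: "\<And>u v. u \<in> D1 \<Longrightarrow> v \<in> D2 \<Longrightarrow> cinner (P (A1 u)) v = cinner (P u) (B1 v)"
    and rel2: "\<And>u v. u \<in> D1 \<Longrightarrow> v \<in> D2 \<Longrightarrow> cinner (P (A2 u)) v = cinner (P u) (B2 v)"
  shows "commute_on D1 A1 A2 \<longleftrightarrow> commute_on D2 B1 B2"
proof -
  have A_in: "A1 u \<in> D1" "A2 u \<in> D1" if "u \<in> D1" for u
    using op_on_mem[OF A1 that] op_on_mem[OF A2 that] .
  have B_in: "B1 v \<in> D2" "B2 v \<in> D2" if "v \<in> D2" for v
    using op_on_mem[OF B1 that] op_on_mem[OF B2 that] .
  have transfer: "cinner (P (A1 (A2 u) - A2 (A1 u))) v = cinner (P u) (B2 (B1 v) - B1 (B2 v))"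
    if "u \<in> D1" "v \<in> D2" for u v
    using that A_in B_in
    by (simp add: bounded_clinear_diff[OF P(1)] cinner_diff_left cinner_diff_right rel1 rel2)
  show ?thesis
  proof
    assume "commute_on D1 A1 A2"
    then have orth: "cinner (P u) (B2 (B1 v) - B1 (B2 v)) = 0" if "u \<in> D1" "v \<in> D2" for u v
      using transfer[OF that] that by (simp add: commute_on_def bounded_clinear_zero[OF P(1)])
    have "B2 (B1 v) - B1 (B2 v) = 0" if "v \<in> D2" for v
    proof -
      have "B2 (B1 v) - B1 (B2 v) \<in> P ` D1"
        using that B_in csubspace_diff[OF D2] image by simp
      then obtain u where u: "u \<in> D1" and w: "B2 (B1 v) - B1 (B2 v) = P u" by blast
      from orth[OF u that] w show ?thesis by simp
    qed
    then show "commute_on D2 B1 B2" by (simp add: commute_on_def)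
  next
    assume "commute_on D2 B1 B2"
    then have orth: "cinner (P (A1 (A2 u) - A2 (A1 u))) v = 0" if "u \<in> D1" "v \<in> D2" for u v
      using transfer[OF that] that by (simp add: commute_on_def)
    have "P (A1 (A2 u) - A2 (A1 u)) = 0" if "u \<in> D1" for u
    proof -
      have "P (A1 (A2 u) - A2 (A1 u)) \<in> D2"
        using that A_in csubspace_diff[OF D1] image by blast
      from orth[OF that this] show ?thesis by simp
    qed
    then have "A1 (A2 u) - A2 (A1 u) = 0" if "u \<in> D1" for u
      using that bounded_clinear_zero[OF P(1)] injD[OF P(2)] by metis
    then show "commute_on D1 A1 A2" by (simp add: commute_on_def)
  qed
qed

section \<open>\<open>\<Gamma>\<^sub>n\<close>-contractions\<close>

lemma norm_esym_self_le_1: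
  assumes "\<forall>j\<in>{1..n}. cmod (z j) \<le> 1"
  shows "cmod (esym n n z) \<le> 1"
proof -
  have "{K. K \<subseteq> {1..n} \<and> card K = n} = {{1..n}}"
  proof
    show "{K. K \<subseteq> {1..n} \<and> card K = n} \<subseteq> {{1..n}}"
    proof
      fix K assume "K \<in> {K. K \<subseteq> {1..n} \<and> card K = n}"
      then have "K = {1..n}" by (intro card_subset_eq) auto
      then show "K \<in> {{1..n}}" by simp
    qed
  qed auto
  then have "cmod (esym n n z) \<le> (\<Prod>j\<in>{1..n}. cmod (z j))"
    by (simp add: esym_def norm_prod_le)
  also have "\<dots> \<le> 1" using assms by (intro prod_le_1) auto
  finally show ?thesis .
qed

text \<open>Testing the defining inequality on the coordinate polynomial \<open>p\<close>, which is bounded by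
\<open>1\<close> on \<open>\<Gamma>\<^sub>n\<close>.\<close>
lemma Gamma_contraction_contraction:
  assumes G: "Gamma_contraction n S P" and n: "n \<ge> 1"
  shows "contraction P"
proof -
  define e where "e = (\<lambda>i::nat. if i = n then 1 else (0::nat))"
  define c where "c = (\<lambda>\<alpha>. if \<alpha> = e then (1::complex) else 0)"
  have supp: "{\<alpha>. c \<alpha> \<noteq> 0} = {e}" by (auto simp: c_def)
  have "is_poly n c" unfolding is_poly_def using n by (auto simp: e_def c_def)
  then have "onorm (poly_op n c S P) \<le> (SUP sp\<in>Gamma n. cmod (poly_eval n c (fst sp) (snd sp)))"
    using G unfolding Gamma_contraction_def by blast
  moreover have "op_monomial n S P e = P"
  proof -
    have "foldr (\<lambda>i acc. (S i ^^ e i) \<circ> acc) xs a = a" if "n \<notin> set xs" for xs and a :: "'a \<Rightarrow> 'a"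
      using that by (induction xs) (auto simp: e_def)
    then show ?thesis by (simp add: op_monomial_def e_def)
  qed
  then have "poly_op n c S P = P" by (simp add: poly_op_def supp c_def scaleC_one)
  moreover have "poly_eval n c s p = p" for s p
  proof -
    have "(\<Prod>i\<in>{1..n-1}. s i ^ e i) = 1" by (intro prod.neutral) (auto simp: e_def)
    then show ?thesis by (simp add: poly_eval_def supp c_def e_def)
  qed
  moreover have "(SUP sp\<in>Gamma n. cmod (snd sp)) \<le> 1"
  proof (rule cSUP_least)
    have "((\<lambda>i. if i \<in> {1..n-1} then esym n i (\<lambda>_. 0) else 0), esym n n (\<lambda>_. 0)) \<in> Gamma n"
      unfolding Gamma_def by auto
    then show "Gamma n \<noteq> {}" by blast
  qed (auto simp: Gamma_def norm_esym_self_le_1)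
  ultimately have "onorm P \<le> 1" by simp
  have P: "bounded_clinear P"
    using G by (simp add: Gamma_contraction_def commuting_tuple_def)
  have "norm (P x) \<le> norm x" for x
  proof -
    have "norm (P x) \<le> onorm P * norm x"
      by (rule onorm[OF bounded_clinear_imp_bounded_linear[OF P]])
    also have "\<dots> \<le> norm x"
      using mult_right_mono[OF \<open>onorm P \<le> 1\<close> norm_ge_zero[of x]] by simp
    finally show ?thesis .
  qed
  with P show ?thesis by (simp add: contraction_def)
qed

theorem mainTheorem8:
  fixes n :: nat and S :: "nat \<Rightarrow> 'a::chilbert \<Rightarrow> 'a" and P :: "'a \<Rightarrow> 'a"
    and A B :: "nat \<Rightarrow> 'a \<Rightarrow> 'a"
  assumes "Gamma_contraction n S P"
    and "invertible_op P"
    and "fundamental_tuple n S P A"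
    and "fundamental_tuple n (\<lambda>i. adjoint (S i)) (adjoint P) B"
  shows "(\<forall>i\<in>{1..n-1}. commute_on (defect_space P) (A i) (A (n - i))) \<longleftrightarrow>
         (\<forall>i\<in>{1..n-1}. commute_on (defect_space (adjoint P)) (B i) (B (n - i)))"
proof (cases "n \<ge> 1")
  case True
  have P: "contraction P" by (rule Gamma_contraction_contraction[OF assms(1) True])
  have S: "commuting_tuple n S P" using assms(1) by (simp add: Gamma_contraction_def)
  have "inj P"
    using assms(2) unfolding invertible_op_def by (metis comp_apply id_apply injI)
  have "commute_on (defect_space P) (A i) (A (n - i))
      \<longleftrightarrow> commute_on (defect_space (adjoint P)) (B i) (B (n - i))" if i: "i \<in> {1..n-1}" for i
  proof (rule commute_on_iff_of_relation[OF _ \<open>inj P\<close> image_defect_space_invertible[OF P assms(2)]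
        csubspace_defect_space[OF P] csubspace_defect_space[OF contraction_adjoint[OF P]]])
    have n_i: "n - i \<in> {1..n-1}" using i by auto
    show "bounded_clinear P" using P by (simp add: contraction_def)
    show "op_on (defect_space P) (A i)" "op_on (defect_space P) (A (n - i))"
      "op_on (defect_space (adjoint P)) (B i)" "op_on (defect_space (adjoint P)) (B (n - i))"
      using assms(3,4) i n_i unfolding fundamental_tuple_def by blast+
    show "cinner (P (A i u)) v = cinner (P u) (B i v)"
      "cinner (P (A (n - i) u)) v = cinner (P u) (B (n - i) v)"
      if "u \<in> defect_space P" "v \<in> defect_space (adjoint P)" for u v
      using fundamental_tuples_relation[OF P S assms(3,4) _ that] i n_i by blast+
  qed
  then show ?thesis by blast
qed simp

end
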